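(* Let $\mathcal{A}=(Q,\Sigma,t,o)$ be a synchronous automaton with finitely many states. If every state of $\mathcal{A}$ has at least two fixed points in $\Sigma^{\omega}$, then every state of $\mathcal{A}$ has infinitely many fixed points in $\Sigma^{\omega}$.
   Context: A synchronous automaton is a quadruple $(Q,\Sigma,t,o)$ with $Q$ a finite set of states, $\Sigma$ a finite alphabet, $t:Q\times\Sigma\to Q$ and $o:Q\times\Sigma\to\Sigma$. $\Sigma^\omega$ is the set of right-infinite words over $\Sigma$. A state $q_0$ acts on $\omega=\sigma_1\sigma_2\cdots\in\Sigma^\omega$ by $q_0(\omega)=o(q_0,\sigma_1)o(q_1,\sigma_2)o(q_2,\sigma_3)\cdots$ where $q_i=t(q_{i-1},\sigma_i)$. A fixed point of $q$ is an $\omega$ with $q(\omega)=\omega$. *)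

theory Defs
  imports Main
begin

text \<open>Right-infinite words over Sigma are functions nat => 's (letter sigma_(i+1) is w i).\<close>

primrec run_state :: "('q \<Rightarrow> 's \<Rightarrow> 'q) \<Rightarrow> 'q \<Rightarrow> (nat \<Rightarrow> 's) \<Rightarrow> nat \<Rightarrow> 'q" where
  "run_state t q w 0 = q"
| "run_state t q w (Suc n) = t (run_state t q w n) (w n)"

definition act :: "('q \<Rightarrow> 's \<Rightarrow> 'q) \<Rightarrow> ('q \<Rightarrow> 's \<Rightarrow> 's) \<Rightarrow> 'q \<Rightarrow> (nat \<Rightarrow> 's) \<Rightarrow> (nat \<Rightarrow> 's)" where
  "act t out q w = (\<lambda>n. out (run_state t q w n) (w n))"

definition fixed_points :: "('q \<Rightarrow> 's \<Rightarrow> 'q) \<Rightarrow> ('q \<Rightarrow> 's \<Rightarrow> 's) \<Rightarrow> 'q \<Rightarrow> (nat \<Rightarrow> 's) set" where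
  "fixed_points t out q = {w. act t out q w = w}"

end

theory Submission
  imports Defs
begin

text \<open>
  Let w1 \<noteq> w2 be fixed points of a state q, first differing at position m,
  and let q' be the state reached from q after reading the first m+1 letters of w1.
  Replacing the tail of w1 after position m by an arbitrary fixed point v of q' yields again a
  fixed point of q (the prefix is still copied, and the tail is processed by q').  This grafting
  is injective in v and never produces w2, so q has strictly more fixed points than q' in the
  sense that every n-element set of fixed points of q' gives an (n+1)-element set of fixed
  points of q.  Since every state has two distinct fixed points, induction on n shows that every
  state has arbitrarily large finite sets of fixed points, hence infinitely many.
\<close>

lemma run_state_shift:
  "run_state t q w (m + k) = run_state t (run_state t q w m) (\<lambda>i. w (m + i)) k"
  by (induction k) auto

lemma run_state_cong_prefix:
  "(\<And>i. i < k \<Longrightarrow> w i = w' i) \<Longrightarrow> run_state t q w k = run_state t q w' k"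
  by (induction k) auto

lemma fixed_points_iff:
  "w \<in> fixed_points t out q \<longleftrightarrow> (\<forall>i. out (run_state t q w i) (w i) = w i)"
  unfolding fixed_points_def act_def by (auto simp: fun_eq_iff)

lemma fixed_points_split:
  "w \<in> fixed_points t out q \<longleftrightarrow>
     (\<forall>i<m. out (run_state t q w i) (w i) = w i) \<and>
     (\<lambda>i. w (m + i)) \<in> fixed_points t out (run_state t q w m)"
proof -
  have suffix: "(\<lambda>i. w (m + i)) \<in> fixed_points t out (run_state t q w m) \<longleftrightarrow>
      (\<forall>k. out (run_state t q w (m + k)) (w (m + k)) = w (m + k))"
    by (simp add: fixed_points_iff run_state_shift[symmetric])
  have split: "(\<forall>i. out (run_state t q w i) (w i) = w i) \<longleftrightarrow>
      (\<forall>i<m. out (run_state t q w i) (w i) = w i) \<and>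
      (\<forall>k. out (run_state t q w (m + k)) (w (m + k)) = w (m + k))"
    by (metis le_add_diff_inverse not_less)
  then show ?thesis
    unfolding fixed_points_iff[of w] suffix .
qed

definition graft :: "(nat \<Rightarrow> 's) \<Rightarrow> nat \<Rightarrow> (nat \<Rightarrow> 's) \<Rightarrow> nat \<Rightarrow> 's" where
  "graft u k v = (\<lambda>i. if i < k then u i else v (i - k))"

lemma graft_prefix: "i < k \<Longrightarrow> graft u k v i = u i"
  by (simp add: graft_def)

lemma graft_suffix: "(\<lambda>i. graft u k v (k + i)) = v"
  by (simp add: graft_def)

lemma inj_graft: "inj (graft u k)"
proof (rule injI)
  fix v v' assume "graft u k v = graft u k v'"
  then have "(\<lambda>i. graft u k v (k + i)) = (\<lambda>i. graft u k v' (k + i))" by simp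
  then show "v = v'" by (simp only: graft_suffix)
qed

lemma graft_fixed_point:
  assumes w: "w \<in> fixed_points t out q"
    and v: "v \<in> fixed_points t out (run_state t q w k)"
  shows "graft w k v \<in> fixed_points t out q"
proof -
  let ?s = "graft w k v"
  have same_run: "run_state t q ?s i = run_state t q w i" if "i \<le> k" for i
    using that by (intro run_state_cong_prefix) (simp add: graft_prefix)
  have "\<forall>i<k. out (run_state t q w i) (w i) = w i"
    using fixed_points_split[of w t out q k] w by simp
  then have "\<forall>i<k. out (run_state t q ?s i) (?s i) = ?s i"
    by (simp add: same_run graft_prefix)
  moreover have "(\<lambda>i. ?s (k + i)) \<in> fixed_points t out (run_state t q ?s k)"
    using v by (simp add: graft_suffix same_run)
  ultimately show ?thesis
    using fixed_points_split[of ?s t out q k] by simp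
qed

lemma fixed_points_card_step:
  assumes w1: "w1 \<in> fixed_points t out q" and w2: "w2 \<in> fixed_points t out q"
    and ne: "w1 \<noteq> w2"
  obtains q' where
    "\<And>F. finite F \<Longrightarrow> F \<subseteq> fixed_points t out q' \<Longrightarrow>
       \<exists>G. finite G \<and> card G = Suc (card F) \<and> G \<subseteq> fixed_points t out q"
proof -
  obtain m where m: "w1 m \<noteq> w2 m"
    using ne by (auto simp: fun_eq_iff)
  let ?g = "graft w1 (Suc m)"
  have "\<exists>G. finite G \<and> card G = Suc (card F) \<and> G \<subseteq> fixed_points t out q"
    if F: "finite F" "F \<subseteq> fixed_points t out (run_state t q w1 (Suc m))" for F
  proof -
    have "?g ` F \<subseteq> fixed_points t out q"
      using F(2) graft_fixed_point[OF w1, of _ "Suc m"] by blast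
    moreover have "w2 \<notin> ?g ` F"
      using m graft_prefix[of m "Suc m" w1] by auto
    moreover have "card (?g ` F) = card F"
      by (rule card_image[OF inj_on_subset[OF inj_graft subset_UNIV]])
    ultimately show ?thesis
      using w2 F(1) by (intro exI[of _ "insert w2 (?g ` F)"]) simp
  qed
  then show thesis by (rule that)
qed

lemma fixed_points_arbitrarily_large:
  assumes two: "\<And>q. \<exists>w1 w2. w1 \<noteq> w2 \<and> w1 \<in> fixed_points t out q \<and> w2 \<in> fixed_points t out q"
  shows "\<exists>F. finite F \<and> card F = n \<and> F \<subseteq> fixed_points t out q"
proof (induction n arbitrary: q)
  case 0
  show ?case by (intro exI[of _ "{}"]) simp
next
  case (Suc n)
  obtain w1 w2 where two_q: "w1 \<in> fixed_points t out q" "w2 \<in> fixed_points t out q" "w1 \<noteq> w2"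
    using two by blast
  obtain q' where step: "\<And>F. finite F \<Longrightarrow> F \<subseteq> fixed_points t out q' \<Longrightarrow>
      \<exists>G. finite G \<and> card G = Suc (card F) \<and> G \<subseteq> fixed_points t out q"
    using fixed_points_card_step[OF two_q] by metis
  from Suc.IH obtain F where F: "finite F" "card F = n" "F \<subseteq> fixed_points t out q'"
    by blast
  show ?case using step[OF F(1) F(3)] F(2) by simp
qed

theorem mainTheorem3:
  fixes t :: "'q::finite \<Rightarrow> 's::finite \<Rightarrow> 'q" and out :: "'q \<Rightarrow> 's \<Rightarrow> 's"
  assumes "\<forall>q. \<exists>w1 w2. w1 \<noteq> w2 \<and> w1 \<in> fixed_points t out q \<and> w2 \<in> fixed_points t out q"
  shows "\<forall>q. infinite (fixed_points t out q)"
proof (intro allI notI)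
  fix q assume fin: "finite (fixed_points t out q)"
  obtain F where F: "finite F" "card F = Suc (card (fixed_points t out q))"
      "F \<subseteq> fixed_points t out q"
    using fixed_points_arbitrarily_large[OF assms[rule_format]] by blast
  then show False
    using card_mono[OF fin F(3)] by simp
qed

end
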